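(* Let $v$ be a typical weight, let $T$ be an intrinsic operator on $\mathcal{H}(\mathbb{D})$ and let $X$ be an initial space. (i) Let $T:X\to H_v$ be bounded and for $N\in\mathbb{N}$ let $D_N=\{z\in\mathbb{D}:\|T^*K_z^H\|>N\}$. If $\lim_{N\to\infty}\sup_{z\in D_N}v(z)\|T^*K_z^H\|=0$, then $T:X\to H_v$ is compact. (ii) Let $T:X\to\mathcal{B}_v$ be bounded and for $N\in\mathbb{N}$ let $D_N=\{z\in\mathbb{D}:\|T^*K_{z,1}^{\mathcal{B}}\|>N\}$. If $\lim_{N\to\infty}\sup_{z\in D_N}v(z)\|T^*K_{z,1}^{\mathcal{B}}\|=0$, then $T:X\to\mathcal{B}_v$ is compact.
   Context: $\mathcal{H}(\mathbb{D})$ is the space of holomorphic functions on the unit disk $\mathbb{D}$ with the topology $\tau_{uc}$ of uniform convergence on compact subsets. A linear operator $T$ on $\mathcal{H}(\mathbb{D})$ is intrinsic if it maps $\tau_{uc}$-convergent sequences to $\tau_{uc}$-convergent sequences. An initial space is a Banach space $X\subset\mathcal{H}(\mathbb{D})$ containing the polynomials such that every sequence in the closed unit ball of $X$ has a subsequence converging in $\tau_{uc}$ to some function in $X$. A typical weight is a continuous radial $v:\mathbb{D}\to(0,1]$, non-increasing in $|z|$, with $v(z)\to0$ as $|z|\to1$. $H_v=\{f:\sup_z v(z)|f(z)|<\infty\}$ with that supremum as norm; $\mathcal{B}_v=\{f:\sup_z v(z)|f'(z)|<\infty\}$ with norm $|f(0)|+\sup_z v(z)|f'(z)|$. $K_z^H$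 is the point evaluation $g\mapsto g(z)$ on $H_v$, $K_{z,1}^{\mathcal{B}}$ the derivative point evaluation $g\mapsto g'(z)$ on $\mathcal{B}_v$, and $T^*$ the adjoint of $T:X\to H_v$ (resp. $\mathcal{B}_v$). *)

theory Defs
  imports "HOL-Complex_Analysis.Complex_Analysis" "HOL-Computational_Algebra.Polynomial"
begin

text \<open>Convention: an element of H(D) is represented by a function complex => complex
  that is holomorphic on the open unit disk and vanishes outside it (so that
  functions are determined by their values on the disk).\<close>

abbreviation disk :: "complex set" where "disk \<equiv> ball 0 1"

definition Hol :: "(complex \<Rightarrow> complex) set" where
  "Hol = {f. f holomorphic_on disk \<and> (\<forall>z. z \<notin> disk \<longrightarrow> f z = 0)}"

definition uc_conv :: "(nat \<Rightarrow> complex \<Rightarrow> complex) \<Rightarrow> (complex \<Rightarrow> complex) \<Rightarrow> bool" where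
  "uc_conv fs f \<longleftrightarrow> (\<forall>K. compact K \<and> K \<subseteq> disk \<longrightarrow> uniform_limit K fs f sequentially)"

definition intrinsic :: "((complex \<Rightarrow> complex) \<Rightarrow> (complex \<Rightarrow> complex)) \<Rightarrow> bool" where
  "intrinsic T \<longleftrightarrow>
     (\<forall>f\<in>Hol. T f \<in> Hol) \<and>
     (\<forall>f\<in>Hol. \<forall>g\<in>Hol. T (\<lambda>z. f z + g z) = (\<lambda>z. T f z + T g z)) \<and>
     (\<forall>f\<in>Hol. \<forall>c. T (\<lambda>z. c * f z) = (\<lambda>z. c * T f z)) \<and>
     (\<forall>fs f. (\<forall>n. fs n \<in> Hol) \<and> f \<in> Hol \<and> uc_conv fs f \<longrightarrow>
        (\<exists>g\<in>Hol. uc_conv (\<lambda>n. T (fs n)) g))"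

definition typical_weight :: "(complex \<Rightarrow> real) \<Rightarrow> bool" where
  "typical_weight v \<longleftrightarrow>
     continuous_on disk v \<and>
     (\<forall>z\<in>disk. \<forall>w\<in>disk. cmod z = cmod w \<longrightarrow> v z = v w) \<and>
     (\<forall>z\<in>disk. 0 < v z \<and> v z \<le> 1) \<and>
     (\<forall>z\<in>disk. \<forall>w\<in>disk. cmod z \<le> cmod w \<longrightarrow> v w \<le> v z) \<and>
     (\<forall>e>0. \<exists>r<1. \<forall>z\<in>disk. r < cmod z \<longrightarrow> v z < e)"

definition initial_space :: "(complex \<Rightarrow> complex) set \<Rightarrow> ((complex \<Rightarrow> complex) \<Rightarrow> real) \<Rightarrow> bool" where
  "initial_space X nX \<longleftrightarrow>
     X \<subseteq> Hol \<and>
     (\<forall>p. (\<lambda>z. if z \<in> disk then poly (p :: complex poly) z else (0::complex)) \<in> X) \<and>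
     (\<forall>f\<in>X. \<forall>g\<in>X. (\<lambda>z. f z + g z) \<in> X) \<and>
     (\<forall>f\<in>X. \<forall>c. (\<lambda>z. c * f z) \<in> X) \<and>
     (\<forall>f\<in>X. 0 \<le> nX f) \<and>
     (\<forall>f\<in>X. nX f = 0 \<longleftrightarrow> f = (\<lambda>z. 0)) \<and>
     (\<forall>f\<in>X. \<forall>c. nX (\<lambda>z. c * f z) = cmod c * nX f) \<and>
     (\<forall>f\<in>X. \<forall>g\<in>X. nX (\<lambda>z. f z + g z) \<le> nX f + nX g) \<and>
     (\<forall>fs. (\<forall>n. fs n \<in> X) \<and>
           (\<forall>e::real>0. \<exists>M::nat. \<forall>m\<ge>M. \<forall>n\<ge>M. nX (\<lambda>z. fs m z - fs n z) < e) \<longrightarrow>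
           (\<exists>f\<in>X. (\<lambda>n. nX (\<lambda>z. fs n z - f z)) \<longlonglongrightarrow> 0)) \<and>
     (\<forall>fs. (\<forall>n. fs n \<in> X \<and> nX (fs n) \<le> 1) \<longrightarrow>
           (\<exists>(r::nat\<Rightarrow>nat) g. strict_mono r \<and> g \<in> X \<and> uc_conv (fs \<circ> r) g))"

definition Hv :: "(complex \<Rightarrow> real) \<Rightarrow> (complex \<Rightarrow> complex) set" where
  "Hv v = {f\<in>Hol. bdd_above ((\<lambda>z. v z * cmod (f z)) ` disk)}"

definition normHv :: "(complex \<Rightarrow> real) \<Rightarrow> (complex \<Rightarrow> complex) \<Rightarrow> real" where
  "normHv v f = (SUP z\<in>disk. v z * cmod (f z))"

definition Bv :: "(complex \<Rightarrow> real) \<Rightarrow> (complex \<Rightarrow> complex) set" where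
  "Bv v = {f\<in>Hol. bdd_above ((\<lambda>z. v z * cmod (deriv f z)) ` disk)}"

definition normBv :: "(complex \<Rightarrow> real) \<Rightarrow> (complex \<Rightarrow> complex) \<Rightarrow> real" where
  "normBv v f = cmod (f 0) + (SUP z\<in>disk. v z * cmod (deriv f z))"

definition bounded_op :: "(complex \<Rightarrow> complex) set \<Rightarrow> ((complex \<Rightarrow> complex) \<Rightarrow> real)
     \<Rightarrow> (complex \<Rightarrow> complex) set \<Rightarrow> ((complex \<Rightarrow> complex) \<Rightarrow> real)
     \<Rightarrow> ((complex \<Rightarrow> complex) \<Rightarrow> (complex \<Rightarrow> complex)) \<Rightarrow> bool" where
  "bounded_op X nX Y nY T \<longleftrightarrow>
     (\<forall>f\<in>X. T f \<in> Y) \<and> (\<exists>C. \<forall>f\<in>X. nY (T f) \<le> C * nX f)"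

definition compact_op :: "(complex \<Rightarrow> complex) set \<Rightarrow> ((complex \<Rightarrow> complex) \<Rightarrow> real)
     \<Rightarrow> (complex \<Rightarrow> complex) set \<Rightarrow> ((complex \<Rightarrow> complex) \<Rightarrow> real)
     \<Rightarrow> ((complex \<Rightarrow> complex) \<Rightarrow> (complex \<Rightarrow> complex)) \<Rightarrow> bool" where
  "compact_op X nX Y nY T \<longleftrightarrow>
     (\<forall>fs. (\<forall>n. fs n \<in> X \<and> nX (fs n) \<le> 1) \<longrightarrow>
        (\<exists>(r::nat\<Rightarrow>nat) g. strict_mono r \<and> g \<in> Y \<and>
               (\<lambda>n. nY (\<lambda>z. T (fs (r n)) z - g z)) \<longlonglongrightarrow> 0))"

definition dual_norm :: "(complex \<Rightarrow> complex) set \<Rightarrow> ((complex \<Rightarrow> complex) \<Rightarrow> real)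
     \<Rightarrow> ((complex \<Rightarrow> complex) \<Rightarrow> complex) \<Rightarrow> real" where
  "dual_norm X nX phi = (SUP f\<in>{f\<in>X. nX f \<le> 1}. cmod (phi f))"

text \<open>T^* K_z^H : g |-> (T g)(z) and T^* K_{z,1}^B : g |-> (T g)'(z).\<close>
definition adj_eval_norm :: "(complex \<Rightarrow> complex) set \<Rightarrow> ((complex \<Rightarrow> complex) \<Rightarrow> real)
     \<Rightarrow> ((complex \<Rightarrow> complex) \<Rightarrow> (complex \<Rightarrow> complex)) \<Rightarrow> complex \<Rightarrow> real" where
  "adj_eval_norm X nX T z = dual_norm X nX (\<lambda>g. T g z)"

definition adj_deriv_eval_norm :: "(complex \<Rightarrow> complex) set \<Rightarrow> ((complex \<Rightarrow> complex) \<Rightarrow> real)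
     \<Rightarrow> ((complex \<Rightarrow> complex) \<Rightarrow> (complex \<Rightarrow> complex)) \<Rightarrow> complex \<Rightarrow> real" where
  "adj_deriv_eval_norm X nX T z = dual_norm X nX (\<lambda>g. deriv (T g) z)"

text \<open>sup over D_N = {z in D. a z > N} of v z * a z; the supremum over the empty set is 0.\<close>
definition sup_DN :: "(complex \<Rightarrow> real) \<Rightarrow> (complex \<Rightarrow> real) \<Rightarrow> nat \<Rightarrow> real" where
  "sup_DN v a N = Sup (insert 0 ((\<lambda>z. v z * a z) ` {z\<in>disk. a z > real N}))"

end

theory Submission
  imports Defs
begin

text \<open>Given a bounded sequence in X, pass to a subsequence converging locally uniformly;
  the differences h_n to its limit stay bounded in X, and T h_n -> 0 locally uniformly because T
  is intrinsic. The weighted supremum of T h_n is split into three regions: on a disk |z| <= r it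
  is small by local uniform convergence; where ||T^* K_z|| > N it is at most
  ||h_n|| * sup_{D_N} v ||T^* K_z||, small by hypothesis; elsewhere it is at most N ||h_n|| v(z),
  small once r is close to 1. The B_v case is the same argument for derivative evaluations, the
  Cauchy estimates transferring local uniform convergence to the derivatives.\<close>

lemma compact_in_disk_imp_subset_cball:
  assumes "compact K" "K \<subseteq> disk"
  obtains \<rho> where "\<rho> < 1" "K \<subseteq> cball 0 \<rho>"
proof (cases "K = {}")
  case True
  then show ?thesis using that[of 0] by simp
next
  case False
  have "compact (norm ` K)"
    using assms(1) by (intro compact_continuous_image continuous_intros)
  then obtain k where "k \<in> K" and k: "\<forall>z\<in>K. norm z \<le> norm k"
    using compact_attains_sup[of "norm ` K"] False by auto
  with assms(2) show ?thesis
    by (intro that[of "norm k"]) auto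
qed

lemma uc_conv_iff_cball:
  "uc_conv F f \<longleftrightarrow> (\<forall>\<rho><1. uniform_limit (cball 0 \<rho>) F f sequentially)"
proof
  assume "uc_conv F f"
  then show "\<forall>\<rho><1. uniform_limit (cball 0 \<rho>) F f sequentially"
    unfolding uc_conv_def by (auto simp: subset_eq)
next
  assume "\<forall>\<rho><1. uniform_limit (cball 0 \<rho>) F f sequentially"
  then show "uc_conv F f"
    unfolding uc_conv_def
    by (metis compact_in_disk_imp_subset_cball uniform_limit_on_subset)
qed

lemma uc_conv_zero_deriv:
  assumes hol: "\<And>n. F n \<in> Hol" and F0: "uc_conv F (\<lambda>z. 0)"
  shows "uc_conv (\<lambda>n. deriv (F n)) (\<lambda>z. 0)"
  unfolding uc_conv_iff_cball uniform_limit_sequentially_iff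
proof (intro allI impI)
  fix \<rho> e :: real assume "\<rho> < 1" "e > 0"
  define \<delta> where "\<delta> = (1 - \<rho>) / 2"
  define R where "R = \<rho> + \<delta>"
  have "\<delta> > 0" "R < 1" using \<open>\<rho> < 1\<close> by (simp_all add: \<delta>_def R_def field_simps)
  obtain N where N: "\<forall>n\<ge>N. \<forall>w\<in>cball 0 R. dist (F n w) 0 < e * \<delta> / 2"
    using F0 \<open>R < 1\<close> \<open>e > 0\<close> \<open>\<delta> > 0\<close>
    unfolding uc_conv_iff_cball uniform_limit_sequentially_iff by (meson mult_pos_pos half_gt_zero)
  show "\<exists>N. \<forall>n\<ge>N. \<forall>z\<in>cball 0 \<rho>. dist (deriv (F n) z) 0 < e"
  proof (intro exI[of _ N] allI impI ballI)
    fix n z assume "n \<ge> N" "z \<in> cball (0::complex) \<rho>"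
    have sub: "cball z \<delta> \<subseteq> cball 0 R"
      using \<open>z \<in> cball 0 \<rho>\<close> by (auto simp: R_def dist_norm)
        (smt (verit) norm_minus_commute norm_triangle_ineq2)
    have "cball 0 R \<subseteq> disk" using \<open>R < 1\<close> by auto
    moreover have "F n holomorphic_on disk" using hol[of n] by (simp add: Hol_def)
    ultimately have holR: "F n holomorphic_on cball 0 R"
      by (rule holomorphic_on_subset[rotated])
    have "cmod ((deriv ^^ 1) (F n) z) \<le> fact 1 * (e * \<delta> / 2) / \<delta> ^ 1"
    proof (rule Cauchy_higher_deriv_bound)
      show "F n holomorphic_on ball z \<delta>"
        using holR sub ball_subset_cball by (meson holomorphic_on_subset subset_trans)
      show "continuous_on (cball z \<delta>) (F n)"
        using holR sub by (meson holomorphic_on_imp_continuous_on holomorphic_on_subset)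
      show "F n w \<in> ball 0 (e * \<delta> / 2)" if "w \<in> ball z \<delta>" for w
        using N \<open>n \<ge> N\<close> subsetD[OF sub, of w] that by (simp add: dist_commute)
    qed (use \<open>\<delta> > 0\<close> in auto)
    then show "dist (deriv (F n) z) 0 < e"
      using \<open>\<delta> > 0\<close> \<open>e > 0\<close> by simp
  qed
qed

lemma
  assumes "typical_weight v"
  shows typical_weight_pos: "z \<in> disk \<Longrightarrow> 0 < v z"
    and typical_weight_le_1: "z \<in> disk \<Longrightarrow> v z \<le> 1"
    and typical_weight_tendsto_boundary: "e > 0 \<Longrightarrow> \<exists>r<1. \<forall>z\<in>disk. r < cmod z \<longrightarrow> v z < e"
  using assms unfolding typical_weight_def by blast+

lemma
  assumes "\<And>z. z \<in> disk \<Longrightarrow> v z * a z \<le> C"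
  shows sup_DN_nonneg: "0 \<le> sup_DN v a N"
    and sup_DN_upper: "z \<in> disk \<Longrightarrow> real N < a z \<Longrightarrow> v z * a z \<le> sup_DN v a N"
proof -
  have "bdd_above (insert 0 ((\<lambda>z. v z * a z) ` {z\<in>disk. a z > real N}))"
    using assms by (intro bdd_aboveI[of _ "max C 0"]) (auto simp: le_max_iff_disj)
  then show "0 \<le> sup_DN v a N" "z \<in> disk \<Longrightarrow> real N < a z \<Longrightarrow> v z * a z \<le> sup_DN v a N"
    unfolding sup_DN_def by (auto intro!: cSup_upper)
qed

lemma weighted_le_max_sup_DN:
  assumes bdd: "\<And>z. z \<in> disk \<Longrightarrow> v z * a z \<le> C"
    and "z \<in> disk" "0 < v z" "\<phi> \<le> a z * \<mu>" "0 \<le> \<mu>" "\<mu> \<le> M"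
  shows "v z * \<phi> \<le> M * max (sup_DN v a N) (v z * real N)"
proof -
  define B where "B = max (sup_DN v a N) (v z * real N)"
  have "0 \<le> B" using sup_DN_nonneg[of v a C, OF bdd] by (simp add: B_def le_max_iff_disj)
  have "v z * a z \<le> B"
  proof (cases "real N < a z")
    case True
    then show ?thesis
      using sup_DN_upper[of v a C, OF bdd \<open>z \<in> disk\<close>] by (simp add: B_def le_max_iff_disj)
  next
    case False
    then show ?thesis using \<open>0 < v z\<close> by (simp add: B_def le_max_iff_disj)
  qed
  have "v z * \<phi> \<le> v z * a z * \<mu>"
    using assms(3,4) by (simp add: mult.assoc)
  also have "\<dots> \<le> B * \<mu>"
    using \<open>v z * a z \<le> B\<close> \<open>0 \<le> \<mu>\<close> by (rule mult_right_mono)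
  also have "\<dots> \<le> B * M"
    using \<open>\<mu> \<le> M\<close> \<open>0 \<le> B\<close> by (rule mult_left_mono)
  finally show ?thesis by (simp add: B_def mult.commute)
qed

lemma weighted_sup_tendsto_zero:
  fixes v a :: "complex \<Rightarrow> real" and \<Phi> :: "nat \<Rightarrow> complex \<Rightarrow> real" and m :: "nat \<Rightarrow> real"
  assumes v: "typical_weight v"
    and bdd: "\<And>z. z \<in> disk \<Longrightarrow> v z * a z \<le> C"
    and sup_DN_0: "(\<lambda>N. sup_DN v a N) \<longlonglongrightarrow> 0"
    and nonneg: "\<And>n z. 0 \<le> \<Phi> n z"
    and le: "\<And>n z. z \<in> disk \<Longrightarrow> \<Phi> n z \<le> a z * m n"
    and m: "\<And>n. 0 \<le> m n" "\<And>n. m n \<le> M"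
    and local: "\<And>\<rho>. \<rho> < 1 \<Longrightarrow> uniform_limit (cball 0 \<rho>) \<Phi> (\<lambda>z. 0) sequentially"
  shows "(\<lambda>n. SUP z\<in>disk. v z * \<Phi> n z) \<longlonglongrightarrow> 0"
proof (rule LIMSEQ_I)
  fix e :: real assume "e > 0"
  define M' where "M' = max M 1"
  have "M' > 0" and m': "\<And>n. m n \<le> M'" using m(2) by (auto simp: M'_def le_max_iff_disj)
  obtain N :: nat where "norm (sup_DN v a N - 0) < e / (2 * M')"
    using LIMSEQ_D[OF sup_DN_0, of "e / (2 * M')"] \<open>e > 0\<close> \<open>M' > 0\<close> by auto
  then have "sup_DN v a N < e / (2 * M')" by simp
  then have N: "M' * sup_DN v a N \<le> e / 2" using \<open>M' > 0\<close> by (simp add: field_simps)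
  define \<delta> where "\<delta> = e / (2 * M' * (real N + 1))"
  have "\<delta> > 0" using \<open>e > 0\<close> \<open>M' > 0\<close> by (simp add: \<delta>_def)
  have \<delta>: "M' * (\<delta> * real N) \<le> e / 2"
  proof -
    have "M' * (\<delta> * real N) \<le> \<delta> * (2 * M' * (real N + 1)) / 2"
      using \<open>\<delta> > 0\<close> \<open>M' > 0\<close> by (simp add: algebra_simps)
    also have "\<dots> = e / 2" using \<open>M' > 0\<close> by (simp add: \<delta>_def)
    finally show ?thesis .
  qed
  obtain r where "r < 1" and r: "\<And>z. z \<in> disk \<Longrightarrow> r < cmod z \<Longrightarrow> v z < \<delta>"
    using typical_weight_tendsto_boundary[OF v \<open>\<delta> > 0\<close>] by blast
  obtain K where K: "\<forall>n\<ge>K. \<forall>z\<in>cball 0 r. \<bar>\<Phi> n z\<bar> < e / 2"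
    using local[OF \<open>r < 1\<close>] \<open>e > 0\<close> unfolding uniform_limit_sequentially_iff
    by (metis dist_real_def diff_zero half_gt_zero)
  show "\<exists>K. \<forall>n\<ge>K. norm ((SUP z\<in>disk. v z * \<Phi> n z) - 0) < e"
  proof (intro exI[of _ K] allI impI)
    fix n assume "n \<ge> K"
    have pointwise: "v z * \<Phi> n z \<le> e / 2" if "z \<in> disk" for z
    proof (cases "cmod z \<le> r")
      case True
      have "v z * \<Phi> n z \<le> \<Phi> n z"
        using typical_weight_le_1[OF v that] typical_weight_pos[OF v that] nonneg[of n z]
        by (simp add: mult_left_le_one_le)
      also have "\<dots> < e / 2" using K[rule_format, of n z] \<open>n \<ge> K\<close> True by simp
      finally show ?thesis by simp
    next
      case False
      have "v z * \<Phi> n z \<le> M' * max (sup_DN v a N) (v z * real N)"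
        using weighted_le_max_sup_DN[of v a C, OF bdd that typical_weight_pos[OF v that] le[OF that] m(1) m'] .
      also have "\<dots> \<le> e / 2"
      proof -
        have "M' * (v z * real N) \<le> M' * (\<delta> * real N)"
          using r[OF that] False \<open>M' > 0\<close> by (intro mult_left_mono mult_right_mono) auto
        then show ?thesis using N \<delta> unfolding max_def by auto
      qed
      finally show ?thesis .
    qed
    have "(SUP z\<in>disk. v z * \<Phi> n z) \<le> e / 2"
      using pointwise by (intro cSUP_least) auto
    moreover have "0 \<le> (SUP z\<in>disk. v z * \<Phi> n z)"
    proof (rule order_trans[OF _ cSUP_upper[of 0]])
      show "0 \<le> v 0 * \<Phi> n 0" using typical_weight_pos[OF v, of 0] nonneg[of n 0] by simp
      show "bdd_above ((\<lambda>z. v z * \<Phi> n z) ` disk)" using pointwise by (intro bdd_aboveI2[of _ _ "e / 2"]) auto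
    qed simp
    ultimately show "norm ((SUP z\<in>disk. v z * \<Phi> n z) - 0) < e" using \<open>e > 0\<close> by simp
  qed
qed

lemma initial_space_subset_Hol: "initial_space X nX \<Longrightarrow> X \<subseteq> Hol"
  unfolding initial_space_def by blast

lemma initial_space_add: "initial_space X nX \<Longrightarrow> f \<in> X \<Longrightarrow> g \<in> X \<Longrightarrow> (\<lambda>z. f z + g z) \<in> X"
  unfolding initial_space_def by blast

lemma initial_space_scale: "initial_space X nX \<Longrightarrow> f \<in> X \<Longrightarrow> (\<lambda>z. c * f z) \<in> X"
  unfolding initial_space_def by blast

lemma initial_space_norm_nonneg: "initial_space X nX \<Longrightarrow> f \<in> X \<Longrightarrow> 0 \<le> nX f"
  unfolding initial_space_def by blast

lemma initial_space_norm_eq_0: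
  "initial_space X nX \<Longrightarrow> f \<in> X \<Longrightarrow> nX f = 0 \<longleftrightarrow> f = (\<lambda>z. 0)"
  unfolding initial_space_def by blast

lemma initial_space_norm_scale:
  "initial_space X nX \<Longrightarrow> f \<in> X \<Longrightarrow> nX (\<lambda>z. c * f z) = cmod c * nX f"
  unfolding initial_space_def by blast

lemma initial_space_norm_triangle:
  "initial_space X nX \<Longrightarrow> f \<in> X \<Longrightarrow> g \<in> X \<Longrightarrow> nX (\<lambda>z. f z + g z) \<le> nX f + nX g"
  unfolding initial_space_def by blast

lemma initial_space_uc_subseq:
  "initial_space X nX \<Longrightarrow> (\<forall>n. fs n \<in> X \<and> nX (fs n) \<le> 1) \<Longrightarrow>
     \<exists>(r :: nat \<Rightarrow> nat) g. strict_mono r \<and> g \<in> X \<and> uc_conv (fs \<circ> r) g"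
  unfolding initial_space_def by blast

lemma initial_space_zero:
  assumes "initial_space X nX"
  shows "(\<lambda>z. 0) \<in> X" and "nX (\<lambda>z. 0) = 0"
proof -
  have "(\<lambda>z. if z \<in> disk then poly (0 :: complex poly) z else 0) \<in> X"
    using assms unfolding initial_space_def by blast
  moreover have "(\<lambda>z. if z \<in> disk then poly (0 :: complex poly) z else 0) = (\<lambda>z. 0)"
    by (rule ext) simp
  ultimately show zero: "(\<lambda>z. 0) \<in> X" by simp
  show "nX (\<lambda>z. 0) = 0"
    using initial_space_norm_eq_0[OF assms zero] by simp
qed

lemma dual_norm_le:
  assumes "initial_space X nX" and "\<And>f. f \<in> X \<Longrightarrow> nX f \<le> 1 \<Longrightarrow> cmod (\<phi> f) \<le> B"
  shows "dual_norm X nX \<phi> \<le> B"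
  using assms initial_space_zero[OF assms(1)] unfolding dual_norm_def
  by (intro cSUP_least) auto

lemma norm_le_dual_norm:
  assumes X: "initial_space X nX"
    and hom: "\<And>h c. h \<in> X \<Longrightarrow> \<phi> (\<lambda>z. c * h z) = c * \<phi> h"
    and bdd: "\<And>f. f \<in> X \<Longrightarrow> nX f \<le> 1 \<Longrightarrow> cmod (\<phi> f) \<le> B"
    and "h \<in> X"
  shows "cmod (\<phi> h) \<le> dual_norm X nX \<phi> * nX h"
proof (cases "nX h = 0")
  case True
  then have "\<phi> h = \<phi> (\<lambda>z. 0 * h z)"
    using initial_space_norm_eq_0[OF X \<open>h \<in> X\<close>] by simp
  then show ?thesis using hom[OF \<open>h \<in> X\<close>, of 0] True by simp
next
  case False
  then have "nX h > 0" using initial_space_norm_nonneg[OF X \<open>h \<in> X\<close>] by simp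
  define c where "c = complex_of_real (1 / nX h)"
  have "(\<lambda>z. c * h z) \<in> X"
    using initial_space_scale[OF X \<open>h \<in> X\<close>] .
  moreover have "nX (\<lambda>z. c * h z) = 1"
    unfolding initial_space_norm_scale[OF X \<open>h \<in> X\<close>] using \<open>nX h > 0\<close> by (simp add: c_def norm_divide)
  ultimately have "cmod (\<phi> (\<lambda>z. c * h z)) \<le> dual_norm X nX \<phi>"
    using bdd unfolding dual_norm_def by (intro cSUP_upper bdd_aboveI2[of _ _ B]) auto
  then have "cmod (c * \<phi> h) \<le> dual_norm X nX \<phi>"
    unfolding hom[OF \<open>h \<in> X\<close>] .
  then have "cmod (\<phi> h) / nX h \<le> dual_norm X nX \<phi>"
    using \<open>nX h > 0\<close> by (simp add: c_def norm_mult norm_divide)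
  then show ?thesis using \<open>nX h > 0\<close> by (simp add: pos_divide_le_eq)
qed

lemma weighted_sup_tendsto_zero_dual:
  fixes L :: "(complex \<Rightarrow> complex) \<Rightarrow> complex \<Rightarrow> complex"
  assumes v: "typical_weight v" and X: "initial_space X nX"
    and hom: "\<And>z h c. z \<in> disk \<Longrightarrow> h \<in> X \<Longrightarrow> L (\<lambda>w. c * h w) z = c * L h z"
    and bdd: "\<And>z f. z \<in> disk \<Longrightarrow> f \<in> X \<Longrightarrow> nX f \<le> 1 \<Longrightarrow> v z * cmod (L f z) \<le> C"
    and sup_DN_0: "(\<lambda>N. sup_DN v (\<lambda>z. dual_norm X nX (\<lambda>h. L h z)) N) \<longlonglongrightarrow> 0"
    and hs: "\<And>n. hs n \<in> X" "\<And>n. nX (hs n) \<le> M"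
    and null: "uc_conv (\<lambda>n. L (hs n)) (\<lambda>z. 0)"
  shows "(\<lambda>n. SUP z\<in>disk. v z * cmod (L (hs n) z)) \<longlonglongrightarrow> 0"
proof (rule weighted_sup_tendsto_zero[OF v _ sup_DN_0])
  have ball_bound: "cmod (L f z) \<le> C / v z" if "z \<in> disk" "f \<in> X" "nX f \<le> 1" for z f
    using bdd[OF that] typical_weight_pos[OF v \<open>z \<in> disk\<close>]
    by (simp add: pos_le_divide_eq mult.commute)
  show "v z * dual_norm X nX (\<lambda>h. L h z) \<le> C" if "z \<in> disk" for z
    using dual_norm_le[OF X ball_bound[OF that]] typical_weight_pos[OF v that]
    by (simp add: pos_le_divide_eq mult.commute)
  show "cmod (L (hs n) z) \<le> dual_norm X nX (\<lambda>h. L h z) * nX (hs n)" if "z \<in> disk" for n z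
    using norm_le_dual_norm[OF X hom[OF that] ball_bound[OF that] hs(1)] .
  show "uniform_limit (cball 0 \<rho>) (\<lambda>n z. cmod (L (hs n) z)) (\<lambda>z. 0) sequentially"
    if "\<rho> < 1" for \<rho>
    using null \<open>\<rho> < 1\<close> unfolding uc_conv_iff_cball uniform_limit_sequentially_iff by simp
qed (use hs(2) initial_space_norm_nonneg[OF X hs(1)] in auto)

lemma intrinsic_Hol: "intrinsic T \<Longrightarrow> f \<in> Hol \<Longrightarrow> T f \<in> Hol"
  unfolding intrinsic_def by blast

lemma intrinsic_add:
  "intrinsic T \<Longrightarrow> f \<in> Hol \<Longrightarrow> g \<in> Hol \<Longrightarrow> T (\<lambda>z. f z + g z) = (\<lambda>z. T f z + T g z)"
  unfolding intrinsic_def by blast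

lemma intrinsic_scale: "intrinsic T \<Longrightarrow> f \<in> Hol \<Longrightarrow> T (\<lambda>z. c * f z) = (\<lambda>z. c * T f z)"
  unfolding intrinsic_def by blast

lemma intrinsic_uc_conv:
  "intrinsic T \<Longrightarrow> (\<And>n. fs n \<in> Hol) \<Longrightarrow> f \<in> Hol \<Longrightarrow> uc_conv fs f \<Longrightarrow>
     \<exists>g. uc_conv (\<lambda>n. T (fs n)) g"
  unfolding intrinsic_def by blast

lemma zero_in_Hol: "(\<lambda>z. 0) \<in> Hol"
  by (simp add: Hol_def)

lemma intrinsic_zero: "intrinsic T \<Longrightarrow> T (\<lambda>z. 0) = (\<lambda>z. 0)"
  using intrinsic_scale[OF _ zero_in_Hol, of T 0] by simp

lemma intrinsic_uc_conv_zero: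
  assumes T: "intrinsic T" and hs: "\<And>n. hs n \<in> Hol" and hs_0: "uc_conv hs (\<lambda>z. 0)"
  shows "uc_conv (\<lambda>n. T (hs n)) (\<lambda>z. 0)"
proof -
  \<comment> \<open>Intrinsic only yields some limit of T (hs n); interleaving hs with the zero sequence,
    which T fixes, forces that limit to vanish.\<close>
  define s where "s k = (if even k then hs (k div 2) else (\<lambda>z. 0))" for k
  have "uc_conv s (\<lambda>z. 0)"
    unfolding uc_conv_def uniform_limit_sequentially_iff
  proof (intro allI impI)
    fix K :: "complex set" and e :: real
    assume "compact K \<and> K \<subseteq> disk" "e > 0"
    then obtain N where "\<forall>n\<ge>N. \<forall>x\<in>K. dist (hs n x) 0 < e"
      using hs_0 unfolding uc_conv_def uniform_limit_sequentially_iff by blast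
    then show "\<exists>N. \<forall>k\<ge>N. \<forall>x\<in>K. dist (s k x) 0 < e"
      using \<open>e > 0\<close> by (intro exI[of _ "2 * N"]) (auto simp: s_def)
  qed
  moreover have "\<And>k. s k \<in> Hol" using hs zero_in_Hol by (simp add: s_def)
  ultimately obtain H where H: "uc_conv (\<lambda>k. T (s k)) H"
    using intrinsic_uc_conv[OF T _ zero_in_Hol] by blast
  have s_even: "s (2 * n) = hs n" and s_odd: "s (2 * n + 1) = (\<lambda>z. 0)" for n
    by (simp_all add: s_def)
  have odd: "strict_mono (\<lambda>n::nat. 2 * n + 1)" and even: "strict_mono (\<lambda>n::nat. 2 * n)"
    by (simp_all add: strict_mono_def)
  show ?thesis
    unfolding uc_conv_def
  proof (intro allI impI)
    fix K assume "compact K \<and> K \<subseteq> disk"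
    then have lim: "uniform_limit K (\<lambda>k. T (s k)) H sequentially"
      using H unfolding uc_conv_def by blast
    have "uniform_limit K (\<lambda>n. T (s (2 * n + 1))) H sequentially"
      using filterlim_compose[OF lim filterlim_subseq[OF odd]] .
    then have zero_lim: "uniform_limit K (\<lambda>n. \<lambda>z. 0) H sequentially"
      unfolding s_odd intrinsic_zero[OF T] .
    have H_0: "H x = 0" if "x \<in> K" for x
    proof -
      have "(\<lambda>n. 0) \<longlonglongrightarrow> H x"
        by (rule tendsto_uniform_limitI[OF zero_lim that])
      then show ?thesis by (simp add: LIMSEQ_const_iff)
    qed
    have "uniform_limit K (\<lambda>n. T (hs n)) H sequentially"
      using filterlim_compose[OF lim filterlim_subseq[OF even]] unfolding s_even .
    then show "uniform_limit K (\<lambda>n. T (hs n)) (\<lambda>z. 0) sequentially"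
      by (rule uniform_limit_cong'[THEN iffD1, rotated 2]) (simp_all add: H_0)
  qed
qed

lemma compact_op_if_uc_null_imp_norm_null:
  assumes X: "initial_space X nX" and T: "intrinsic T" and TY: "\<And>f. f \<in> X \<Longrightarrow> T f \<in> Y"
    and null: "\<And>hs M. (\<And>n. hs n \<in> X) \<Longrightarrow> (\<And>n. nX (hs n) \<le> M) \<Longrightarrow>
                 uc_conv (\<lambda>n. T (hs n)) (\<lambda>z. 0) \<Longrightarrow> (\<lambda>n. nY (T (hs n))) \<longlonglongrightarrow> 0"
  shows "compact_op X nX Y nY T"
  unfolding compact_op_def
proof (intro allI impI)
  fix fs :: "nat \<Rightarrow> complex \<Rightarrow> complex" assume fs: "\<forall>n. fs n \<in> X \<and> nX (fs n) \<le> 1"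
  then obtain r g where r: "strict_mono r" and "g \<in> X" and fs_g: "uc_conv (fs \<circ> r) g"
    using initial_space_uc_subseq[OF X] by blast
  define hs where "hs n = (\<lambda>z. fs (r n) z + (-1) * g z)" for n
  have "(\<lambda>z. (-1) * g z) \<in> X"
    using initial_space_scale[OF X \<open>g \<in> X\<close>] .
  then have hs_X: "hs n \<in> X" for n
    unfolding hs_def using fs initial_space_add[OF X] by blast
  have hs_le: "nX (hs n) \<le> 1 + nX g" for n
  proof -
    have "nX (hs n) \<le> nX (fs (r n)) + nX (\<lambda>z. (-1) * g z)"
      unfolding hs_def using fs \<open>(\<lambda>z. (-1) * g z) \<in> X\<close> by (intro initial_space_norm_triangle[OF X]) auto
    also have "\<dots> \<le> 1 + nX g"
      using fs initial_space_norm_scale[OF X \<open>g \<in> X\<close>, of "-1"] by simp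
    finally show ?thesis .
  qed
  have "uc_conv hs (\<lambda>z. 0)"
    using fs_g unfolding uc_conv_def uniform_limit_sequentially_iff
    by (simp add: hs_def dist_norm)
  then have "uc_conv (\<lambda>n. T (hs n)) (\<lambda>z. 0)"
    using intrinsic_uc_conv_zero[OF T] hs_X initial_space_subset_Hol[OF X] by blast
  then have "(\<lambda>n. nY (T (hs n))) \<longlonglongrightarrow> 0"
    by (rule null[OF hs_X hs_le])
  moreover have "T (hs n) = (\<lambda>z. T (fs (r n)) z - T g z)" for n
  proof -
    have Hol: "fs (r n) \<in> Hol" "g \<in> Hol"
      using initial_space_subset_Hol[OF X] fs \<open>g \<in> X\<close> by auto
    then have "T (hs n) = (\<lambda>z. T (fs (r n)) z + T (\<lambda>z. (-1) * g z) z)"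
      unfolding hs_def
      using intrinsic_add[OF T Hol(1)] \<open>(\<lambda>z. (-1) * g z) \<in> X\<close> initial_space_subset_Hol[OF X]
      by blast
    then show ?thesis
      using intrinsic_scale[OF T Hol(2), of "-1"] by simp
  qed
  ultimately show "\<exists>r g. strict_mono r \<and> g \<in> Y \<and> (\<lambda>n. nY (\<lambda>z. T (fs (r n)) z - g z)) \<longlonglongrightarrow> 0"
    using r TY[OF \<open>g \<in> X\<close>] by auto
qed

lemma bounded_op_unit_ball:
  assumes "bounded_op X nX Y nY T" and "initial_space X nX"
  obtains C where "\<And>f. f \<in> X \<Longrightarrow> nX f \<le> 1 \<Longrightarrow> nY (T f) \<le> C"
proof -
  obtain C where C: "\<And>f. f \<in> X \<Longrightarrow> nY (T f) \<le> C * nX f"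
    using assms(1) unfolding bounded_op_def by blast
  have "nY (T f) \<le> max C 0" if "f \<in> X" "nX f \<le> 1" for f
  proof -
    have "C * nX f \<le> max C 0 * nX f"
      using initial_space_norm_nonneg[OF assms(2) \<open>f \<in> X\<close>] by (intro mult_right_mono) auto
    also have "\<dots> \<le> max C 0"
      using \<open>nX f \<le> 1\<close> by (simp add: mult_left_le)
    finally show ?thesis using C[OF \<open>f \<in> X\<close>] by linarith
  qed
  then show ?thesis by (rule that)
qed

lemma weighted_le_normHv: "f \<in> Hv v \<Longrightarrow> z \<in> disk \<Longrightarrow> v z * cmod (f z) \<le> normHv v f"
  unfolding Hv_def normHv_def by (auto intro: cSUP_upper)

lemma weighted_deriv_le_normBv:
  assumes "f \<in> Bv v" "z \<in> disk"
  shows "v z * cmod (deriv f z) \<le> normBv v f"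
proof -
  have "v z * cmod (deriv f z) \<le> (SUP z\<in>disk. v z * cmod (deriv f z))"
    using assms unfolding Bv_def by (auto intro: cSUP_upper)
  then show ?thesis unfolding normBv_def using norm_ge_zero[of "f 0"] by linarith
qed

lemma compact_op_Hv:
  assumes v: "typical_weight v" and T: "intrinsic T" and X: "initial_space X nX"
    and bounded: "bounded_op X nX (Hv v) (normHv v) T"
    and sup_DN_0: "(\<lambda>N. sup_DN v (adj_eval_norm X nX T) N) \<longlonglongrightarrow> 0"
  shows "compact_op X nX (Hv v) (normHv v) T"
proof (rule compact_op_if_uc_null_imp_norm_null[OF X T])
  show TY: "T f \<in> Hv v" if "f \<in> X" for f
    using bounded that unfolding bounded_op_def by blast
  obtain C where C: "\<And>f. f \<in> X \<Longrightarrow> nX f \<le> 1 \<Longrightarrow> normHv v (T f) \<le> C"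
    using bounded_op_unit_ball[OF bounded X] by blast
  fix hs :: "nat \<Rightarrow> complex \<Rightarrow> complex" and M
  assume hs: "\<And>n. hs n \<in> X" "\<And>n. nX (hs n) \<le> M" and null: "uc_conv (\<lambda>n. T (hs n)) (\<lambda>z. 0)"
  show "(\<lambda>n. normHv v (T (hs n))) \<longlonglongrightarrow> 0"
    unfolding normHv_def
  proof (rule weighted_sup_tendsto_zero_dual[where L = T, OF v X _ _ _ hs null])
    show "T (\<lambda>w. c * h w) z = c * T h z" if "h \<in> X" for z h c
      using intrinsic_scale[OF T] initial_space_subset_Hol[OF X] that by auto
    show "v z * cmod (T f z) \<le> C" if "z \<in> disk" "f \<in> X" "nX f \<le> 1" for z f
      using weighted_le_normHv[OF TY[OF \<open>f \<in> X\<close>] \<open>z \<in> disk\<close>] C[OF \<open>f \<in> X\<close> \<open>nX f \<le> 1\<close>]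
      by linarith
    show "(\<lambda>N. sup_DN v (\<lambda>z. dual_norm X nX (\<lambda>h. T h z)) N) \<longlonglongrightarrow> 0"
      using sup_DN_0 unfolding adj_eval_norm_def .
  qed
qed

lemma compact_op_Bv:
  assumes v: "typical_weight v" and T: "intrinsic T" and X: "initial_space X nX"
    and bounded: "bounded_op X nX (Bv v) (normBv v) T"
    and sup_DN_0: "(\<lambda>N. sup_DN v (adj_deriv_eval_norm X nX T) N) \<longlonglongrightarrow> 0"
  shows "compact_op X nX (Bv v) (normBv v) T"
proof (rule compact_op_if_uc_null_imp_norm_null[OF X T])
  show TY: "T f \<in> Bv v" if "f \<in> X" for f
    using bounded that unfolding bounded_op_def by blast
  obtain C where C: "\<And>f. f \<in> X \<Longrightarrow> nX f \<le> 1 \<Longrightarrow> normBv v (T f) \<le> C"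
    using bounded_op_unit_ball[OF bounded X] by blast
  fix hs :: "nat \<Rightarrow> complex \<Rightarrow> complex" and M
  assume hs: "\<And>n. hs n \<in> X" "\<And>n. nX (hs n) \<le> M" and null: "uc_conv (\<lambda>n. T (hs n)) (\<lambda>z. 0)"
  have T_Hol: "T h \<in> Hol" if "h \<in> X" for h
    using intrinsic_Hol[OF T] initial_space_subset_Hol[OF X] that by blast
  have "uniform_limit (cball 0 0) (\<lambda>n. T (hs n)) (\<lambda>z. 0) sequentially"
    using null zero_less_one unfolding uc_conv_iff_cball by blast
  then have "(\<lambda>n. T (hs n) 0) \<longlonglongrightarrow> 0"
    by simp
  moreover have "(\<lambda>n. SUP z\<in>disk. v z * cmod (deriv (T (hs n)) z)) \<longlonglongrightarrow> 0"
  proof (rule weighted_sup_tendsto_zero_dual[where L = "\<lambda>h. deriv (T h)" and hs = hs, OF v X _ _ _ hs])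
    show "deriv (T (\<lambda>w. c * h w)) z = c * deriv (T h) z" if "z \<in> disk" "h \<in> X" for z h c
    proof -
      have "T h field_differentiable at z"
        using T_Hol[OF \<open>h \<in> X\<close>] \<open>z \<in> disk\<close>
        by (auto simp: Hol_def intro: holomorphic_on_imp_differentiable_at)
      then show ?thesis
        using intrinsic_scale[OF T] initial_space_subset_Hol[OF X] \<open>h \<in> X\<close> by (auto simp: deriv_cmult)
    qed
    show "v z * cmod (deriv (T f) z) \<le> C" if "z \<in> disk" "f \<in> X" "nX f \<le> 1" for z f
      using weighted_deriv_le_normBv[OF TY[OF \<open>f \<in> X\<close>] \<open>z \<in> disk\<close>] C[OF \<open>f \<in> X\<close> \<open>nX f \<le> 1\<close>]
      by linarith
    show "(\<lambda>N. sup_DN v (\<lambda>z. dual_norm X nX (\<lambda>h. deriv (T h) z)) N) \<longlonglongrightarrow> 0"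
      using sup_DN_0 unfolding adj_deriv_eval_norm_def .
    show "uc_conv (\<lambda>n. deriv (T (hs n))) (\<lambda>z. 0)"
      using uc_conv_zero_deriv[OF T_Hol[OF hs(1)] null] .
  qed
  ultimately show "(\<lambda>n. normBv v (T (hs n))) \<longlonglongrightarrow> 0"
    unfolding normBv_def by (intro tendsto_add_zero tendsto_norm_zero)
qed

theorem proposition3p1:
  fixes v :: "complex \<Rightarrow> real"
    and T :: "(complex \<Rightarrow> complex) \<Rightarrow> (complex \<Rightarrow> complex)"
    and X :: "(complex \<Rightarrow> complex) set"
    and nX :: "(complex \<Rightarrow> complex) \<Rightarrow> real"
  assumes "typical_weight v"
    and "intrinsic T"
    and "initial_space X nX"
  shows "(bounded_op X nX (Hv v) (normHv v) T \<and>
          (\<lambda>N. sup_DN v (adj_eval_norm X nX T) N) \<longlonglongrightarrow> 0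
            \<longrightarrow> compact_op X nX (Hv v) (normHv v) T)
       \<and> (bounded_op X nX (Bv v) (normBv v) T \<and>
          (\<lambda>N. sup_DN v (adj_deriv_eval_norm X nX T) N) \<longlonglongrightarrow> 0
            \<longrightarrow> compact_op X nX (Bv v) (normBv v) T)"
  using compact_op_Hv[OF assms] compact_op_Bv[OF assms] by blast

end
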